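(* Let $h>0$ be fixed, let $d=2$, and let $\{z_j\}_{j\ge 1}\subset\mathbb{R}$ be an observed scalar time series. Assume there exist a matrix $B^*\in\mathbb{R}^{2\times 2}$ and a (hidden) scalar series $\{z_j^{*\dagger}\}_{j\ge1}\subset\mathbb{R}$ such that, writing $\boldsymbol x^{*\ddagger}_j=(z_j,z_j^{*\dagger})^{\top}$, the underlying true linear dynamics $\boldsymbol x^{*\ddagger}_{j+1}=B^*\boldsymbol x^{*\ddagger}_j$ hold for all $j=1,2,\ldots$. Given $n$ observations $z_1,\dots,z_n$, let $(\hat B,\{\hat z^{\dagger}_j\}_{j=1}^n)$ be any minimizer, over $B\in\mathbb{R}^{2\times2}$ and $\{z_j^{\dagger}\}_{j=1}^n\subset\mathbb{R}$, of the ARS loss $$\ell(B,\{z^{\dagger}_j\}_{j=1}^n)=\sum_{j=1}^{n-1}\big\|\boldsymbol x^{\ddagger}_{j+1}-B\boldsymbol x^{\ddagger}_j\big\|_2^2,\qquad \boldsymbol x^{\ddagger}_j=(z_j,z_j^{\dagger})^{\top},$$ and set $\hat{\boldsymbol x}^{\ddagger}_n=(z_n,\hat z^{\dagger}_n)^{\top}$. Then, for sufficiently large $n$, the ARS prediction $\hat z_{n+k}=(1,0)\hat B^k\hat{\boldsymbol x}^{\ddagger}_n$ coincides with the true value $z_{n+k}$ for every $k\in\mathbb{N}$.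
   Context: This is the autoregressive with slack time series (ARS) model in the case of a 2-dimensional state with one observed coordinate ($r=1$) and one missing coordinate ($s=1$): the missing coordinate is replaced by a slack time series $\{z_j^{\dagger}\}$ that is estimated jointly with the AR(1) transition matrix $B$ by minimizing the loss above. Here $z_j$ denotes the observation at time $jh$. *)

theory Defs
  imports "HOL-Analysis.Analysis"
begin

fun mat_pow :: "real^'n^'n \<Rightarrow> nat \<Rightarrow> real^'n^'n" where
  "mat_pow B 0 = mat 1"
| "mat_pow B (Suc k) = B ** mat_pow B k"

definition ars_state :: "(nat \<Rightarrow> real) \<Rightarrow> (nat \<Rightarrow> real) \<Rightarrow> nat \<Rightarrow> real^2" where
  "ars_state z zd j = vector [z j, zd j]"

definition ars_loss :: "(nat \<Rightarrow> real) \<Rightarrow> nat \<Rightarrow> real^2^2 \<Rightarrow> (nat \<Rightarrow> real) \<Rightarrow> real" where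
  "ars_loss z n B zd =
     (\<Sum>j=1..n-1. (norm (ars_state z zd (j+1) - B *v ars_state z zd j))\<^sup>2)"

text \<open>(B, zd) minimizes the loss over all matrices and all slack series
  (only the values zd 1..zd n enter the loss).\<close>
definition ars_minimizer :: "(nat \<Rightarrow> real) \<Rightarrow> nat \<Rightarrow> real^2^2 \<Rightarrow> (nat \<Rightarrow> real) \<Rightarrow> bool" where
  "ars_minimizer z n B zd \<longleftrightarrow>
     (\<forall>B' zd'. ars_loss z n B zd \<le> ars_loss z n B' zd')"

definition ars_pred :: "(nat \<Rightarrow> real) \<Rightarrow> nat \<Rightarrow> real^2^2 \<Rightarrow> (nat \<Rightarrow> real) \<Rightarrow> nat \<Rightarrow> real" where
  "ars_pred z n B zd k = (mat_pow B k *v ars_state z zd n) $ 1"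

end

theory Submission
  imports Defs
begin

text \<open>Since the true system fits the data exactly, every minimizer of the ARS loss has loss zero,
  so it fits the observed window exactly as well. By Cayley--Hamilton, the first coordinate of an
  orbit of a \<open>2 \<times> 2\<close> matrix \<open>B\<close> satisfies the scalar recurrence with characteristic
  polynomial \<open>X\<^sup>2 - trace B X + det B\<close>. Hence \<open>z\<close> satisfies the true recurrence everywhere and
  the fitted one on the window. The residual of the fitted recurrence again satisfies the true
  one (shift operators commute), and it vanishes at two consecutive indices of the window (this
  needs \<open>n \<ge> 4\<close>), so it vanishes everywhere: \<open>z\<close> follows the fitted recurrence forever, and
  so do the ARS predictions.\<close>

definition second_order_rec :: "real \<Rightarrow> real \<Rightarrow> nat \<Rightarrow> (nat \<Rightarrow> real) \<Rightarrow> bool" where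
  "second_order_rec a b i u \<longleftrightarrow> (\<forall>m\<ge>i. u (m + 2) = a * u (m + 1) - b * u m)"

lemma second_order_rec_unique:
  assumes "second_order_rec a b i u" and "second_order_rec a b i v"
    and "u i = v i" and "u (i + 1) = v (i + 1)" and "i \<le> m"
  shows "u m = v m"
proof -
  have "u (i + k) = v (i + k) \<and> u (i + k + 1) = v (i + k + 1)" for k
  proof (induction k)
    case 0
    then show ?case using assms(3,4) by simp
  next
    case (Suc k)
    have "u (i + k + 2) = v (i + k + 2)"
      using assms(1,2) Suc.IH unfolding second_order_rec_def by (metis le_add1)
    with Suc.IH show ?case by simp
  qed
  then show ?thesis using \<open>i \<le> m\<close> by (metis le_add_diff_inverse)
qed

lemma second_order_rec_shift:
  assumes "second_order_rec a b i u" and "i \<le> j"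
  shows "second_order_rec a b 0 (\<lambda>k. u (j + k))"
  unfolding second_order_rec_def
proof (intro allI impI)
  fix m :: nat
  have "i \<le> j + m" using assms(2) by simp
  then show "u (j + (m + 2)) = a * u (j + (m + 1)) - b * u (j + m)"
    using assms(1) unfolding second_order_rec_def by (simp add: add.assoc)
qed

lemma second_order_rec_transfer:
  assumes rec: "second_order_rec a b i u"
    and start: "u (i + 2) = c * u (i + 1) - d * u i" "u (i + 3) = c * u (i + 2) - d * u (i + 1)"
  shows "second_order_rec c d i u"
proof -
  define e where "e m = u (m + 2) - c * u (m + 1) + d * u m" for m
  define r where "r m = u (m + 2) - a * u (m + 1) + b * u m" for m
  have "e (m + 2) = a * e (m + 1) - b * e m" if "i \<le> m" for m
  proof -
    have "r j = 0" if "i \<le> j" for j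
      using rec that unfolding second_order_rec_def r_def by simp
    then have "r m = 0" "r (m + 1) = 0" "r (m + 2) = 0"
      using \<open>i \<le> m\<close> by simp_all
    moreover have "e (m + 2) - a * e (m + 1) + b * e m = r (m + 2) - c * r (m + 1) + d * r m"
      unfolding e_def r_def by (simp add: algebra_simps)
    ultimately show ?thesis by simp
  qed
  then have "second_order_rec a b i e"
    unfolding second_order_rec_def by blast
  moreover have "second_order_rec a b i (\<lambda>_. 0)"
    unfolding second_order_rec_def by simp
  moreover have "e i = 0" "e (i + 1) = 0"
    using start by (simp_all add: e_def numeral_3_eq_3)
  ultimately have "e m = 0" if "i \<le> m" for m
    using second_order_rec_unique that by metis
  then show ?thesis
    unfolding second_order_rec_def e_def by (simp add: algebra_simps)
qed

lemma cayley_hamilton_2: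
  fixes B :: "real^2^2"
  shows "B *v (B *v x) = trace B *s (B *v x) - det B *s x"
  by (simp add: vec_eq_iff forall_2 matrix_vector_mult_def sum_2 trace_def det_2 algebra_simps)

lemma orbit_first_coord_rec:
  fixes B :: "real^2^2"
  assumes "W (Suc m) = B *v W m" and "W (Suc (Suc m)) = B *v W (Suc m)"
  shows "W (m + 2) $ 1 = trace B * W (m + 1) $ 1 - det B * W m $ 1"
  using assms cayley_hamilton_2[of B "W m"] by simp

lemma orbit_second_order_rec:
  fixes B :: "real^2^2"
  assumes "\<And>k. W (Suc k) = B *v W k"
  shows "second_order_rec (trace B) (det B) 0 (\<lambda>k. W k $ 1)"
  using orbit_first_coord_rec[of W, OF assms assms] by (simp add: second_order_rec_def)

lemma mat_pow_Suc_right: "mat_pow B (Suc k) = mat_pow B k ** B"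
  by (induction k) (simp_all add: matrix_mul_assoc)

lemma mat_pow_first_coord:
  fixes B :: "real^2^2"
  assumes "second_order_rec (trace B) (det B) i u" and "i \<le> m"
    and "y $ 1 = u m" and "(B *v y) $ 1 = u (Suc m)"
  shows "(mat_pow B k *v y) $ 1 = u (m + k)"
proof -
  have "second_order_rec (trace B) (det B) 0 (\<lambda>k. (mat_pow B k *v y) $ 1)"
    by (rule orbit_second_order_rec) (simp add: matrix_vector_mul_assoc)
  from second_order_rec_unique[OF this second_order_rec_shift[OF assms(1,2)]]
  show ?thesis using assms(3,4) by simp
qed

lemma ars_state_first [simp]: "ars_state z zd j $ 1 = z j"
  by (simp add: ars_state_def)

lemma second_order_rec_of_window_fit:
  fixes Bs B :: "real^2^2"
  assumes exact: "\<And>j. 1 \<le> j \<Longrightarrow> ars_state z zs (Suc j) = Bs *v ars_state z zs j"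
    and fit: "\<And>j. 1 \<le> j \<Longrightarrow> j < n \<Longrightarrow> ars_state z zd (Suc j) = B *v ars_state z zd j"
    and "4 \<le> n"
  shows "second_order_rec (trace B) (det B) 1 z"
proof -
  have true_rec: "second_order_rec (trace Bs) (det Bs) 1 z"
    using orbit_first_coord_rec[of "ars_state z zs", OF exact exact] by (simp add: second_order_rec_def)
  have window: "z (m + 2) = trace B * z (m + 1) - det B * z m" if "1 \<le> m" "m + 2 \<le> n" for m
    using orbit_first_coord_rec[of "ars_state z zd", OF fit fit] that by simp
  show ?thesis
    using window[of 1] window[of 2] \<open>4 \<le> n\<close>
    by (intro second_order_rec_transfer[OF true_rec]) (simp_all add: eval_nat_numeral)
qed

lemma ars_loss_eq_0_iff:
  "ars_loss z n B zd = 0 \<longleftrightarrow>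
     (\<forall>j. 1 \<le> j \<and> j < n \<longrightarrow> ars_state z zd (j + 1) = B *v ars_state z zd j)"
  unfolding ars_loss_def by (subst sum_nonneg_eq_0_iff) auto

lemma ars_minimizer_fits:
  assumes exact: "\<And>j. 1 \<le> j \<Longrightarrow> ars_state z zs (Suc j) = Bs *v ars_state z zs j"
    and "ars_minimizer z n B zd" and "1 \<le> j" and "j < n"
  shows "ars_state z zd (Suc j) = B *v ars_state z zd j"
proof -
  have "ars_loss z n Bs zs = 0"
    using exact by (simp add: ars_loss_eq_0_iff)
  then have "ars_loss z n B zd \<le> 0"
    using \<open>ars_minimizer z n B zd\<close> unfolding ars_minimizer_def by metis
  moreover have "0 \<le> ars_loss z n B zd"
    unfolding ars_loss_def by (simp add: sum_nonneg)
  ultimately show ?thesis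
    using \<open>1 \<le> j\<close> \<open>j < n\<close> by (simp add: ars_loss_eq_0_iff)
qed

theorem proposition1:
  fixes z :: "nat \<Rightarrow> real"
  assumes "\<exists>(Bs :: real^2^2) (zs :: nat \<Rightarrow> real).
             \<forall>j\<ge>1. ars_state z zs (j+1) = Bs *v ars_state z zs j"
  shows "\<exists>N. \<forall>n\<ge>N. \<forall>(Bh :: real^2^2) (zh :: nat \<Rightarrow> real).
           ars_minimizer z n Bh zh \<longrightarrow> (\<forall>k. ars_pred z n Bh zh k = z (n+k))"
proof (intro exI allI impI)
  obtain Bs :: "real^2^2" and zs where exact: "ars_state z zs (Suc j) = Bs *v ars_state z zs j"
    if "1 \<le> j" for j
    using assms by auto
  fix n Bh zh k
  assume "4 \<le> n" and "ars_minimizer z n Bh zh"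
  let ?x = "ars_state z zh"
  have fit: "?x (Suc j) = Bh *v ?x j" if "1 \<le> j" "j < n" for j
    using ars_minimizer_fits[OF exact \<open>ars_minimizer z n Bh zh\<close> that] .
  have z_rec: "second_order_rec (trace Bh) (det Bh) 1 z"
    using second_order_rec_of_window_fit[OF exact fit \<open>4 \<le> n\<close>] .
  have last_fit: "Bh *v ?x (n - 1) = ?x n"
    using fit[of "n - 1"] \<open>4 \<le> n\<close> by simp
  have "(mat_pow Bh (Suc k) *v ?x (n - 1)) $ 1 = z (n - 1 + Suc k)"
    using \<open>4 \<le> n\<close> last_fit by (intro mat_pow_first_coord[OF z_rec]) simp_all
  then show "ars_pred z n Bh zh k = z (n + k)"
    using \<open>4 \<le> n\<close> last_fit
    by (simp add: ars_pred_def mat_pow_Suc_right matrix_vector_mul_assoc[symmetric] del: mat_pow.simps)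
qed

end
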